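(* Let $d\ge1$, $N\ge1$, $T>0$. Let $v_\textup{d}:\mathbb{R}^d\to\mathbb{R}^d$ and $K:\mathbb{R}^d\to\mathbb{R}^d$ be Lipschitz continuous with constants $\operatorname{Lip}(v_\textup{d}),\operatorname{Lip}(K)>0$, $K$ compactly supported, and set $\xi^N:=2\max\{\operatorname{Lip}(v_\textup{d}),N\operatorname{Lip}(K)\}$. (i) Let $\mu_\cdot\in C([0,T];\mathcal{M}^N_1(\mathbb{R}^d))$ be a solution of the Cauchy problem with flow map $\gamma_t$. Then for all $x,y\in\mathbb{R}^d$ and $t\in[0,T]$, $|\gamma_t(y)-\gamma_t(x)|\le e^{\xi^Nt}|y-x|$. (ii) Let $\mu_\cdot,\nu_\cdot\in C([0,T];\mathcal{M}^N_1(\mathbb{R}^d))$ be two solutions of the Cauchy problem with initial data $\bar\mu,\bar\nu\in\mathcal{M}^N_1(\mathbb{R}^d)$ and respective flow maps $\gamma^\mu,\gamma^\nu$. Then for all $x\in\mathbb{R}^d$ and $t\in[0,T]$, \[ |\gamma^\nu_t(x)-\gamma^\mu_t(x)|\le\frac{\xi^Ne^{\xi^Nt}}{N}\int_0^tW_1(\mu_s,\nu_s)\,ds. \]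
   Context: $\mathcal{M}^N_1(\mathbb{R}^d)$ is the set of positive Borel measures on $\mathbb{R}^d$ with total mass $N$ and finite first moment. For $\mu,\nu\in\mathcal{M}^N_1(\mathbb{R}^d)$, $W_1(\mu,\nu)=\inf_{\pi\in\Pi(\mu,\nu)}\int_{\mathbb{R}^d\times\mathbb{R}^d}|x-y|\,d\pi(x,y)$, where $\Pi(\mu,\nu)$ is the set of measures on $\mathbb{R}^d\times\mathbb{R}^d$ with marginals $\mu$ and $\nu$; equivalently $W_1(\mu,\nu)=\sup\{\int\phi\,d(\nu-\mu):\phi:\mathbb{R}^d\to\mathbb{R}\ \text{1-Lipschitz}\}$. The velocity field is $v[\mu](x)=v_\textup{d}(x)-\int_{\mathbb{R}^d}K(y-x)\,d\mu(y)$. A solution of the Cauchy problem $\partial_t\mu_t+\nabla\cdot(\mu_tv[\mu_t])=0$, $\mu_0=\bar\mu$, on $[0,T]$ is a curve $\mu_\cdot\in C([0,T];\mathcal{M}^N_1(\mathbb{R}^d))$ (weak solution) given by $\mu_t=\gamma_t\#\bar\mu$ (push-forward), where the flow map satisfies $\gamma_t(x)=x+\int_0^tv[\mu_s](\gamma_s(x))\,ds$. *)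

theory Defs
  imports "HOL-Analysis.Analysis"
begin

definition M1 :: "real \<Rightarrow> 'a::euclidean_space measure set" where
  "M1 N = {\<mu>. sets \<mu> = sets borel \<and> emeasure \<mu> (space \<mu>) = ennreal N
             \<and> integrable \<mu> (\<lambda>x. norm x)}"

definition couplings :: "'a::euclidean_space measure \<Rightarrow> 'a measure \<Rightarrow> ('a \<times> 'a) measure set" where
  "couplings \<mu> \<nu> = {\<pi>. sets \<pi> = sets (borel :: ('a \<times> 'a) measure)
       \<and> distr \<pi> borel fst = \<mu> \<and> distr \<pi> borel snd = \<nu>}"

definition W1 :: "'a::euclidean_space measure \<Rightarrow> 'a measure \<Rightarrow> ennreal" where
  "W1 \<mu> \<nu> = (INF \<pi> \<in> couplings \<mu> \<nu>. \<integral>\<^sup>+ p. ennreal (dist (fst p) (snd p)) \<partial>\<pi>)"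

definition vfield :: "('a::euclidean_space \<Rightarrow> 'a) \<Rightarrow> ('a \<Rightarrow> 'a) \<Rightarrow> 'a measure \<Rightarrow> 'a \<Rightarrow> 'a" where
  "vfield vd K \<mu> x = vd x - (\<integral>y. K (y - x) \<partial>\<mu>)"

definition is_solution ::
  "real \<Rightarrow> real \<Rightarrow> ('a::euclidean_space \<Rightarrow> 'a) \<Rightarrow> ('a \<Rightarrow> 'a) \<Rightarrow> 'a measure
     \<Rightarrow> (real \<Rightarrow> 'a measure) \<Rightarrow> (real \<Rightarrow> 'a \<Rightarrow> 'a) \<Rightarrow> bool" where
  "is_solution N T vd K \<mu>bar \<mu> \<gamma> \<longleftrightarrow>
     \<mu>bar \<in> M1 N
     \<and> (\<forall>t\<in>{0..T}. \<mu> t \<in> M1 N)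
     \<and> (\<forall>t\<in>{0..T}. ((\<lambda>s. W1 (\<mu> s) (\<mu> t)) \<longlongrightarrow> 0) (at t within {0..T}))
     \<and> (\<forall>t\<in>{0..T}. \<gamma> t \<in> borel_measurable borel \<and> \<mu> t = distr \<mu>bar borel (\<gamma> t))
     \<and> (\<forall>t\<in>{0..T}. \<forall>x. ((\<lambda>s. vfield vd K (\<mu> s) (\<gamma> s x)) has_integral (\<gamma> t x - x)) {0..t})"

end

theory Submission
  imports Defs
begin

text \<open>For every measure of mass \<open>N\<close> the field \<open>v[\<mu>]\<close> is \<open>(Lip(v_d) + N Lip(K))\<close>-Lipschitz,
  so Gronwall's inequality applied to \<open>\<gamma>\<^sub>t y - \<gamma>\<^sub>t x\<close> gives (i), as \<open>Lip(v_d) + N Lip(K) \<le> \<xi>\<^sup>N\<close>.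
  For (ii), integrating the Lipschitz function \<open>K(\<cdot> - x)\<close> against a coupling of \<open>\<mu>\<^sub>s\<close> and
  \<open>\<nu>\<^sub>s\<close> shows that \<open>v[\<nu>\<^sub>s]\<close> and \<open>v[\<mu>\<^sub>s]\<close> differ by at most \<open>Lip(K) W\<^sub>1(\<mu>\<^sub>s, \<nu>\<^sub>s)\<close>, and
  Gronwall's inequality applies again since \<open>Lip(K) \<le> \<xi>\<^sup>N / N\<close>.

  The delicate point is that \<open>s \<mapsto> W\<^sub>1(\<mu>\<^sub>s, \<nu>\<^sub>s)\<close> has to be integrable. It is in fact
  Lipschitz: trajectories cannot merge (Gronwall backwards in time), so \<open>\<gamma>\<^sub>s = \<Phi> \<circ> \<gamma>\<^sub>t\<close> with
  \<open>\<Phi>\<close> Borel, and transporting a near-optimal coupling of \<open>\<mu>\<^sub>t\<close> and \<open>\<nu>\<^sub>t\<close> along \<open>\<Phi>\<close> and its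
  analogue for \<open>\<nu>\<close> costs at most the mean displacement of the flows, which is \<open>O(|t - s|)\<close>.\<close>

section \<open>Gronwall inequalities\<close>

lemma gronwall_forward:
  fixes u :: "real \<Rightarrow> real"
  assumes cont: "continuous_on {0..b} u" and L: "L \<ge> 0"
    and le: "\<And>t. t \<in> {0..b} \<Longrightarrow> u t \<le> C + L * integral {0..t} u"
    and t: "t \<in> {0..b}"
  shows "u t \<le> C * exp (L * t)"
proof -
  define \<phi> where "\<phi> t = integral {0..t} u" for t
  define h where "h t = exp (- L * t) * (C + L * \<phi> t)" for t
  have \<phi>_deriv: "(\<phi> has_real_derivative u x) (at x within {0..b})" if "x \<in> {0..b}" for x
    unfolding \<phi>_def by (rule integral_has_real_derivative[OF cont that])
  have \<phi>_cont: "continuous_on {0..b} \<phi>" using \<phi>_deriv by (rule DERIV_continuous_on)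
  have "continuous_on {0..t} h"
    unfolding h_def using t by (intro continuous_intros continuous_on_subset[OF \<phi>_cont]) auto
  then have "h t \<le> h 0"
  proof (rule DERIV_nonpos_imp_decreasing_open[rotated 2])
    fix x assume x: "0 < x" "x < t"
    then have x_int: "x \<in> interior {0..b}" using t by auto
    then have "(\<phi> has_real_derivative u x) (at x)"
      using \<phi>_deriv[of x] at_within_interior[OF x_int] interior_subset by fastforce
    then have "(h has_real_derivative exp (- L * x) * (- L) * (C + L * \<phi> x) + exp (- L * x) * (L * u x)) (at x)"
      unfolding h_def by (auto intro!: derivative_eq_intros)
    moreover have "exp (- L * x) * (L * u x) \<le> exp (- L * x) * (L * (C + L * \<phi> x))"
      using le[of x] x t L unfolding \<phi>_def by (intro mult_left_mono) auto
    then have "exp (- L * x) * (- L) * (C + L * \<phi> x) + exp (- L * x) * (L * u x) \<le> 0"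
      by (simp add: algebra_simps)
    ultimately show "\<exists>y. (h has_real_derivative y) (at x) \<and> y \<le> 0" by blast
  qed (use t in auto)
  then have "C + L * \<phi> t \<le> C * exp (L * t)"
    by (simp add: h_def \<phi>_def exp_minus field_simps)
  then show ?thesis using le[OF t] unfolding \<phi>_def by linarith
qed

lemma gronwall_backward_zero:
  fixes u :: "real \<Rightarrow> real"
  assumes cont: "continuous_on {a..b} u" and L: "L \<ge> 0"
    and nonneg: "\<And>t. t \<in> {a..b} \<Longrightarrow> u t \<ge> 0"
    and le: "\<And>t. t \<in> {a..b} \<Longrightarrow> u t \<le> L * integral {t..b} u"
    and t: "t \<in> {a..b}"
  shows "u t = 0"
proof -
  define \<psi> where "\<psi> t = integral {a..t} u" for t
  define h where "h t = exp (L * t) * (\<psi> b - \<psi> t)" for t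
  have tail: "\<psi> b - \<psi> r = integral {r..b} u" if "r \<in> {a..b}" for r
    using Henstock_Kurzweil_Integration.integral_combine[where a=a and c=r and b=b and f=u] that
      integrable_continuous_real[OF cont]
    unfolding \<psi>_def by auto
  have \<psi>_deriv: "(\<psi> has_real_derivative u x) (at x within {a..b})" if "x \<in> {a..b}" for x
    unfolding \<psi>_def by (rule integral_has_real_derivative[OF cont that])
  have \<psi>_cont: "continuous_on {a..b} \<psi>" using \<psi>_deriv by (rule DERIV_continuous_on)
  have "continuous_on {t..b} h"
    unfolding h_def using t by (intro continuous_intros continuous_on_subset[OF \<psi>_cont]) auto
  then have "h t \<le> h b"
  proof (rule DERIV_nonneg_imp_increasing_open[rotated 2])
    fix x assume x: "t < x" "x < b"
    then have x_int: "x \<in> interior {a..b}" using t by auto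
    then have "(\<psi> has_real_derivative u x) (at x)"
      using \<psi>_deriv[of x] at_within_interior[OF x_int] interior_subset by fastforce
    then have "(h has_real_derivative exp (L * x) * L * (\<psi> b - \<psi> x) + exp (L * x) * (- u x)) (at x)"
      unfolding h_def by (auto intro!: derivative_eq_intros)
    moreover have "exp (L * x) * L * (\<psi> b - \<psi> x) + exp (L * x) * (- u x) \<ge> 0"
      using le[of x] tail[of x] x t by (simp add: algebra_simps)
    ultimately show "\<exists>y. (h has_real_derivative y) (at x) \<and> y \<ge> 0" by blast
  qed (use t in auto)
  then have "\<psi> b - \<psi> t \<le> 0" by (simp add: h_def mult_le_0_iff)
  then have "L * integral {t..b} u \<le> 0" using tail[OF t] L by (simp add: mult_nonneg_nonpos)
  then have "u t \<le> 0" using le[OF t] by linarith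
  then show ?thesis using nonneg[OF t] by simp
qed

lemma integral_equation_increment:
  fixes f :: "real \<Rightarrow> 'a::euclidean_space"
  assumes eq: "\<And>t. t \<in> {0..T} \<Longrightarrow> (f has_integral (g t - g0)) {0..t}"
    and st: "0 \<le> s" "s \<le> t" "t \<le> T"
  shows "g t - g s = integral {s..t} f" "f integrable_on {s..t}"
proof -
  have t: "(f has_integral (g t - g0)) {0..t}" and s: "(f has_integral (g s - g0)) {0..s}"
    using eq st by auto
  then have f_int: "f integrable_on {0..t}" by blast
  then show "f integrable_on {s..t}" using integrable_on_subinterval st by fastforce
  have "integral {0..s} f + integral {s..t} f = integral {0..t} f"
    using Henstock_Kurzweil_Integration.integral_combine[where a=0 and c=s and b=t and f=f] st f_int
    by auto
  then show "g t - g s = integral {s..t} f"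
    using integral_unique[OF t] integral_unique[OF s] by (simp add: algebra_simps)
qed

lemma integral_equation_continuous:
  fixes f :: "real \<Rightarrow> 'a::euclidean_space"
  assumes eq: "\<And>t. t \<in> {0..T} \<Longrightarrow> (f has_integral (g t - g0)) {0..t}"
  shows "continuous_on {0..T} g"
proof (cases "T \<ge> 0")
  case True
  have g: "g t = g0 + integral {0..t} f" if "t \<in> {0..T}" for t
    using eq[OF that] by (simp add: integral_unique)
  have "continuous_on {0..T} (\<lambda>t. g0 + integral {0..t} f)"
    using eq[of T] True by (intro continuous_intros indefinite_integral_continuous_1) auto
  then show ?thesis by (rule continuous_on_eq) (simp add: g)
qed simp

lemma gronwall_integral_equation:
  fixes f g :: "real \<Rightarrow> 'a::euclidean_space" and c :: "real \<Rightarrow> real"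
  assumes eq: "\<And>t. t \<in> {0..T} \<Longrightarrow> (f has_integral (g t - g0)) {0..t}" and L: "L \<ge> 0"
    and bound: "\<And>s. s \<in> {0..T} \<Longrightarrow> norm (f s) \<le> L * norm (g s) + c s"
    and c_int: "c integrable_on {0..T}" and c_nonneg: "\<And>s. s \<in> {0..T} \<Longrightarrow> c s \<ge> 0"
    and t: "t \<in> {0..T}"
  shows "norm (g t) \<le> (norm g0 + integral {0..t} c) * exp (L * t)"
proof -
  have g_cont: "continuous_on {0..T} g" by (rule integral_equation_continuous[OF eq])
  have norm_g_int: "(\<lambda>s. L * norm (g s)) integrable_on {0..r}" if "r \<in> {0..T}" for r
    using that
    by (intro integrable_continuous_real continuous_intros continuous_on_subset[OF g_cont]) auto
  have "continuous_on {0..t} (\<lambda>s. norm (g s))"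
    using t by (intro continuous_intros continuous_on_subset[OF g_cont]) auto
  then show ?thesis
  proof (rule gronwall_forward[OF _ L])
    show "t \<in> {0..t}" using t by auto
    fix r assume r: "r \<in> {0..t}"
    then have rT: "r \<in> {0..T}" and sub: "{0..r} \<subseteq> {0..T}" using t by auto
    have c_int_r: "c integrable_on {0..r}" using integrable_on_subinterval[OF c_int sub] .
    have "norm (g r) \<le> norm g0 + norm (integral {0..r} f)"
      using eq[OF rT] norm_triangle_ineq[of g0 "g r - g0"] by (simp add: integral_unique)
    also have "norm (integral {0..r} f) \<le> integral {0..r} (\<lambda>s. L * norm (g s) + c s)"
      using eq[OF rT] bound sub
      by (intro integral_norm_bound_integral integrable_add norm_g_int[OF rT] c_int_r) auto
    also have "\<dots> = L * integral {0..r} (\<lambda>s. norm (g s)) + integral {0..r} c"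
      using integral_add[OF norm_g_int[OF rT] c_int_r] by simp
    also have "integral {0..r} c \<le> integral {0..t} c"
      using r t c_nonneg integrable_on_subinterval[OF c_int]
      by (intro integral_subset_le c_int_r) auto
    finally show "norm (g r) \<le> norm g0 + integral {0..t} c + L * integral {0..r} (\<lambda>s. norm (g s))"
      by simp
  qed
qed

section \<open>Couplings and the Wasserstein distance\<close>

lemma measurable_sets_borel:
  assumes "sets M = sets borel" "f \<in> borel_measurable borel"
  shows "f \<in> borel_measurable M"
  using assms(2) by (simp add: measurable_cong_sets[OF assms(1) refl])

lemma M1_D:
  assumes "\<mu> \<in> M1 N"
  shows "sets \<mu> = sets borel" "space \<mu> = UNIV" "finite_measure \<mu>"
    "emeasure \<mu> UNIV = ennreal N" "integrable \<mu> (\<lambda>x. norm x)"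
proof -
  show sets: "sets \<mu> = sets borel" and "integrable \<mu> (\<lambda>x. norm x)"
    using assms by (simp_all add: M1_def)
  show space: "space \<mu> = UNIV" using sets_eq_imp_space_eq[OF sets] by simp
  show "emeasure \<mu> UNIV = ennreal N" using assms space by (simp add: M1_def)
  then show "finite_measure \<mu>" by (intro finite_measureI) (simp add: space)
qed

lemma M1_measure_UNIV:
  assumes "\<mu> \<in> M1 N" "N \<ge> 0"
  shows "measure \<mu> UNIV = N"
  using M1_D[OF assms(1)] assms(2) by (simp add: measure_def)

lemma fst_borel_measurable[measurable]:
  "fst \<in> borel_measurable (borel :: ('a::euclidean_space \<times> 'a) measure)"
  by (intro borel_measurable_continuous_onI continuous_intros)

lemma snd_borel_measurable[measurable]:
  "snd \<in> borel_measurable (borel :: ('a::euclidean_space \<times> 'a) measure)"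
  by (intro borel_measurable_continuous_onI continuous_intros)

lemma map_prod_borel_measurable:
  fixes \<Phi> \<Psi> :: "'a::euclidean_space \<Rightarrow> 'a"
  assumes "\<Phi> \<in> borel_measurable borel" "\<Psi> \<in> borel_measurable borel"
  shows "map_prod \<Phi> \<Psi> \<in> borel_measurable (borel :: ('a::euclidean_space \<times> 'a) measure)"
proof -
  have "(\<lambda>p. (\<Phi> (fst p), \<Psi> (snd p))) \<in> borel_measurable (borel :: ('a \<times> 'a) measure)"
    using measurable_compose[OF fst_borel_measurable assms(1)]
      measurable_compose[OF snd_borel_measurable assms(2)]
    by (intro borel_measurable_Pair) (simp_all add: comp_def)
  moreover have "map_prod \<Phi> \<Psi> = (\<lambda>p. (\<Phi> (fst p), \<Psi> (snd p)))" by (auto simp: fun_eq_iff)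
  ultimately show ?thesis by simp
qed

lemma dist_ennreal_borel_measurable:
  "(\<lambda>p. ennreal (dist (fst p) (snd p))) \<in> borel_measurable (borel :: ('a::euclidean_space \<times> 'a) measure)"
  by measurable

lemma displacement_ennreal_borel_measurable:
  fixes \<Phi> :: "'a::euclidean_space \<Rightarrow> 'a"
  assumes "\<Phi> \<in> borel_measurable borel"
  shows "(\<lambda>x. ennreal (norm (\<Phi> x - x))) \<in> borel_measurable borel"
  using assms by measurable

lemma nn_integral_distr_borel:
  assumes "h \<in> measurable M borel" "f \<in> borel_measurable borel"
  shows "(\<integral>\<^sup>+ x. f x \<partial>distr M borel h) = (\<integral>\<^sup>+ x. f (h x) \<partial>M)"
  using assms by (simp add: nn_integral_distr)

abbreviation transport_cost :: "('a::euclidean_space \<times> 'a) measure \<Rightarrow> ennreal" where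
  "transport_cost \<pi> \<equiv> \<integral>\<^sup>+ p. ennreal (dist (fst p) (snd p)) \<partial>\<pi>"

lemma couplings_D:
  assumes "\<pi> \<in> couplings \<mu> \<nu>"
  shows "sets \<pi> = sets borel" "distr \<pi> borel fst = \<mu>" "distr \<pi> borel snd = \<nu>"
    "fst \<in> borel_measurable \<pi>" "snd \<in> borel_measurable \<pi>"
proof -
  show sets: "sets \<pi> = sets borel" "distr \<pi> borel fst = \<mu>" "distr \<pi> borel snd = \<nu>"
    using assms by (simp_all add: couplings_def)
  show "fst \<in> borel_measurable \<pi>" "snd \<in> borel_measurable \<pi>"
    by (simp_all add: measurable_sets_borel[OF sets(1)])
qed

lemma W1_le_transport_cost: "\<pi> \<in> couplings \<mu> \<nu> \<Longrightarrow> W1 \<mu> \<nu> \<le> transport_cost \<pi>"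
  unfolding W1_def by (rule INF_lower)

lemma norm_ennreal_borel: "(\<lambda>x::'a::euclidean_space. ennreal (norm x)) \<in> borel_measurable borel"
  by measurable

lemma transport_cost_le_first_moments:
  assumes "\<pi> \<in> couplings \<mu> \<nu>"
  shows "transport_cost \<pi> \<le> (\<integral>\<^sup>+ x. ennreal (norm x) \<partial>\<mu>) + (\<integral>\<^sup>+ x. ennreal (norm x) \<partial>\<nu>)"
proof -
  note \<pi> = couplings_D[OF assms]
  have "transport_cost \<pi> \<le> (\<integral>\<^sup>+ p. ennreal (norm (fst p)) + ennreal (norm (snd p)) \<partial>\<pi>)"
    by (intro nn_integral_mono)
      (simp add: dist_norm norm_triangle_ineq4 flip: ennreal_plus)
  also have "\<dots> = (\<integral>\<^sup>+ p. ennreal (norm (fst p)) \<partial>\<pi>) + (\<integral>\<^sup>+ p. ennreal (norm (snd p)) \<partial>\<pi>)"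
    using \<pi>(4,5) by (intro nn_integral_add) auto
  also have "\<dots> = (\<integral>\<^sup>+ x. ennreal (norm x) \<partial>\<mu>) + (\<integral>\<^sup>+ x. ennreal (norm x) \<partial>\<nu>)"
    using nn_integral_distr_borel[OF \<pi>(4) norm_ennreal_borel]
      nn_integral_distr_borel[OF \<pi>(5) norm_ennreal_borel]
    by (simp add: \<pi>(2,3))
  finally show ?thesis .
qed

lemma scaled_product_in_couplings:
  fixes \<mu> \<nu> :: "'a::euclidean_space measure"
  assumes \<mu>: "\<mu> \<in> M1 N" and \<nu>: "\<nu> \<in> M1 N" and N: "N > 0"
  shows "density (\<mu> \<Otimes>\<^sub>M \<nu>) (\<lambda>_. ennreal (1 / N)) \<in> couplings \<mu> \<nu>"
proof -
  define \<pi> where "\<pi> = density (\<mu> \<Otimes>\<^sub>M \<nu>) (\<lambda>_. ennreal (1 / N))"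
  interpret \<nu>: finite_measure \<nu> using M1_D[OF \<nu>] by simp
  have sets_\<pi>: "sets \<pi> = sets (borel :: ('a \<times> 'a) measure)"
    unfolding \<pi>_def using sets_pair_measure_cong[OF M1_D(1)[OF \<mu>] M1_D(1)[OF \<nu>]] borel_prod
    by (metis sets_density)
  have [measurable]: "fst \<in> borel_measurable \<pi>" "snd \<in> borel_measurable \<pi>"
    by (simp_all add: measurable_sets_borel[OF sets_\<pi>])
  have rectangle: "emeasure \<pi> (A \<times> B) = ennreal (1 / N) * (emeasure \<mu> A * emeasure \<nu> B)"
    if "A \<in> sets borel" "B \<in> sets borel" for A B
    using that M1_D(1)[OF \<mu>] M1_D(1)[OF \<nu>]
    by (simp add: \<pi>_def emeasure_density nn_integral_cmult_indicator \<nu>.emeasure_pair_measure_Times)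
  have unit: "ennreal (1 / N) * ennreal N = 1"
    using N by (simp flip: ennreal_mult)
  have space_\<pi>: "space \<pi> = UNIV" using sets_eq_imp_space_eq[OF sets_\<pi>] by simp
  have "distr \<pi> borel fst = \<mu>"
  proof (rule measure_eqI)
    fix A assume "A \<in> sets (distr \<pi> borel fst)"
    then have A: "A \<in> sets borel" by simp
    have "emeasure (distr \<pi> borel fst) A = emeasure \<pi> (A \<times> UNIV)"
      using A by (simp add: emeasure_distr space_\<pi> vimage_fst)
    also have "\<dots> = emeasure \<mu> A"
      using A rectangle[OF A sets.top[of borel]] M1_D(4)[OF \<nu>] unit
      by (metis mult.commute mult.left_commute mult_1_right space_borel)
    finally show "emeasure (distr \<pi> borel fst) A = emeasure \<mu> A" .
  qed (simp add: M1_D(1)[OF \<mu>])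
  moreover have "distr \<pi> borel snd = \<nu>"
  proof (rule measure_eqI)
    fix B assume "B \<in> sets (distr \<pi> borel snd)"
    then have B: "B \<in> sets borel" by simp
    have "emeasure (distr \<pi> borel snd) B = emeasure \<pi> (UNIV \<times> B)"
      using B by (simp add: emeasure_distr space_\<pi> vimage_snd)
    also have "\<dots> = emeasure \<nu> B"
      using B rectangle[OF sets.top[of borel] B] M1_D(4)[OF \<mu>] unit
      by (metis mult.assoc mult_1 space_borel)
    finally show "emeasure (distr \<pi> borel snd) B = emeasure \<nu> B" .
  qed (simp add: M1_D(1)[OF \<nu>])
  ultimately show ?thesis using sets_\<pi> by (simp add: couplings_def \<pi>_def)
qed

lemma W1_finite:
  fixes \<mu> \<nu> :: "'a::euclidean_space measure"
  assumes \<mu>: "\<mu> \<in> M1 N" and \<nu>: "\<nu> \<in> M1 N" and N: "N > 0"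
  shows "W1 \<mu> \<nu> < \<infinity>"
proof -
  note \<pi> = scaled_product_in_couplings[OF \<mu> \<nu> N]
  have "W1 \<mu> \<nu> \<le> (\<integral>\<^sup>+ x. ennreal (norm x) \<partial>\<mu>) + (\<integral>\<^sup>+ x. ennreal (norm x) \<partial>\<nu>)"
    using W1_le_transport_cost[OF \<pi>] transport_cost_le_first_moments[OF \<pi>] by (rule order_trans)
  also have "\<dots> < \<infinity>"
    using integrableD(2)[OF M1_D(5)[OF \<mu>]] integrableD(2)[OF M1_D(5)[OF \<nu>]]
    by (simp add: less_top)
  finally show ?thesis .
qed

lemma couplings_distr_map_prod:
  fixes \<Phi> \<Psi> g g' h h' :: "'a::euclidean_space \<Rightarrow> 'a"
  assumes \<pi>: "\<pi> \<in> couplings (distr \<mu> borel g) (distr \<nu> borel h)"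
    and sets: "sets \<mu> = sets borel" "sets \<nu> = sets borel"
    and \<Phi>_meas: "\<Phi> \<in> borel_measurable borel" and \<Psi>_meas: "\<Psi> \<in> borel_measurable borel"
    and g: "g \<in> borel_measurable borel" and h: "h \<in> borel_measurable borel"
    and \<Phi>_g: "\<Phi> \<circ> g = g'" and \<Psi>_h: "\<Psi> \<circ> h = h'"
  shows "distr \<pi> borel (map_prod \<Phi> \<Psi>) \<in> couplings (distr \<mu> borel g') (distr \<nu> borel h')"
proof -
  note c = couplings_D[OF \<pi>]
  have map_prod_meas: "map_prod \<Phi> \<Psi> \<in> borel_measurable \<pi>"
    using measurable_sets_borel[OF c(1) map_prod_borel_measurable[OF \<Phi>_meas \<Psi>_meas]] .
  have g_meas: "g \<in> borel_measurable \<mu>" and h_meas: "h \<in> borel_measurable \<nu>"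
    using measurable_sets_borel[OF sets(1) g] measurable_sets_borel[OF sets(2) h] .
  have "distr (distr \<pi> borel (map_prod \<Phi> \<Psi>)) borel fst = distr (distr \<pi> borel fst) borel \<Phi>"
    using map_prod_meas c(4,5) \<Phi>_meas \<Psi>_meas by (simp add: distr_distr comp_def)
  also have "\<dots> = distr \<mu> borel g'" using g_meas \<Phi>_meas by (simp add: c(2) distr_distr \<Phi>_g[symmetric])
  finally have "distr (distr \<pi> borel (map_prod \<Phi> \<Psi>)) borel fst = distr \<mu> borel g'" .
  moreover have "distr (distr \<pi> borel (map_prod \<Phi> \<Psi>)) borel snd = distr (distr \<pi> borel snd) borel \<Psi>"
    using map_prod_meas c(4,5) \<Phi>_meas \<Psi>_meas by (simp add: distr_distr comp_def)
  moreover have "\<dots> = distr \<nu> borel h'" using h_meas \<Psi>_meas by (simp add: c(3) distr_distr \<Psi>_h[symmetric])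
  ultimately show ?thesis by (simp add: couplings_def)
qed

lemma transport_cost_distr_map_prod_le:
  fixes \<Phi> \<Psi> :: "'a::euclidean_space \<Rightarrow> 'a"
  assumes sets: "sets \<pi> = sets borel"
    and \<Phi>: "\<Phi> \<in> borel_measurable borel" and \<Psi>: "\<Psi> \<in> borel_measurable borel"
  shows "transport_cost (distr \<pi> borel (map_prod \<Phi> \<Psi>))
    \<le> transport_cost \<pi> + (\<integral>\<^sup>+ x. ennreal (norm (\<Phi> x - x)) \<partial>distr \<pi> borel fst)
       + (\<integral>\<^sup>+ y. ennreal (norm (\<Psi> y - y)) \<partial>distr \<pi> borel snd)"
proof -
  have fst_meas: "fst \<in> borel_measurable \<pi>" and snd_meas: "snd \<in> borel_measurable \<pi>"
    by (simp_all add: measurable_sets_borel[OF sets])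
  have map_prod_meas: "map_prod \<Phi> \<Psi> \<in> borel_measurable \<pi>"
    using measurable_sets_borel[OF sets map_prod_borel_measurable[OF \<Phi> \<Psi>]] .
  note cost_meas = dist_ennreal_borel_measurable[where 'a='a]
  note \<Phi>_meas = displacement_ennreal_borel_measurable[OF \<Phi>]
  note \<Psi>_meas = displacement_ennreal_borel_measurable[OF \<Psi>]
  have "transport_cost (distr \<pi> borel (map_prod \<Phi> \<Psi>))
      = (\<integral>\<^sup>+ p. ennreal (dist (\<Phi> (fst p)) (\<Psi> (snd p))) \<partial>\<pi>)"
    using nn_integral_distr_borel[OF map_prod_meas cost_meas] by (simp add: map_prod_def case_prod_beta)
  also have "\<dots> \<le> (\<integral>\<^sup>+ p. ennreal (dist (fst p) (snd p))
      + (ennreal (norm (\<Phi> (fst p) - fst p)) + ennreal (norm (\<Psi> (snd p) - snd p))) \<partial>\<pi>)"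
  proof (rule nn_integral_mono)
    fix p :: "'a \<times> 'a"
    have "dist (\<Phi> (fst p)) (\<Psi> (snd p))
        = norm ((fst p - snd p) + ((\<Phi> (fst p) - fst p) - (\<Psi> (snd p) - snd p)))"
      by (simp add: dist_norm algebra_simps)
    also have "\<dots> \<le> norm (fst p - snd p) + norm ((\<Phi> (fst p) - fst p) - (\<Psi> (snd p) - snd p))"
      by (rule norm_triangle_ineq)
    also have "norm ((\<Phi> (fst p) - fst p) - (\<Psi> (snd p) - snd p))
        \<le> norm (\<Phi> (fst p) - fst p) + norm (\<Psi> (snd p) - snd p)"
      by (rule norm_triangle_ineq4)
    finally show "ennreal (dist (\<Phi> (fst p)) (\<Psi> (snd p))) \<le> ennreal (dist (fst p) (snd p))
        + (ennreal (norm (\<Phi> (fst p) - fst p)) + ennreal (norm (\<Psi> (snd p) - snd p)))"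
      by (simp add: dist_norm flip: ennreal_plus)
  qed
  also have "\<dots> = transport_cost \<pi> + ((\<integral>\<^sup>+ p. ennreal (norm (\<Phi> (fst p) - fst p)) \<partial>\<pi>)
      + (\<integral>\<^sup>+ p. ennreal (norm (\<Psi> (snd p) - snd p)) \<partial>\<pi>))"
    using measurable_sets_borel[OF sets cost_meas]
      measurable_compose[OF fst_meas \<Phi>_meas] measurable_compose[OF snd_meas \<Psi>_meas]
    by (simp add: nn_integral_add)
  also have "\<dots> = transport_cost \<pi> + (\<integral>\<^sup>+ x. ennreal (norm (\<Phi> x - x)) \<partial>distr \<pi> borel fst)
       + (\<integral>\<^sup>+ y. ennreal (norm (\<Psi> y - y)) \<partial>distr \<pi> borel snd)"
    using nn_integral_distr_borel[OF fst_meas \<Phi>_meas] nn_integral_distr_borel[OF snd_meas \<Psi>_meas]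
    by (simp add: add.assoc)
  finally show ?thesis .
qed

section \<open>The nonlocal velocity field and its flows\<close>

locale nonlocal_velocity =
  fixes vd K :: "'a::euclidean_space \<Rightarrow> 'a" and N Lv LK MK :: real
  assumes N_pos: "N > 0"
    and Lv: "Lv \<ge> 0" "Lv-lipschitz_on UNIV vd"
    and LK: "LK > 0" "LK-lipschitz_on UNIV K"
    and K_bounded: "\<And>x. norm (K x) \<le> MK"
begin

lemma vd_lipschitz: "norm (vd x - vd y) \<le> Lv * norm (x - y)"
  using lipschitz_onD[OF Lv(2)] by (simp add: dist_norm)

lemma K_lipschitz: "norm (K x - K y) \<le> LK * norm (x - y)"
  using lipschitz_onD[OF LK(2)] by (simp add: dist_norm)

lemma MK_nonneg: "MK \<ge> 0"
  by (rule order_trans[OF norm_ge_zero K_bounded])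

lemma K_shift_borel_measurable: "(\<lambda>y. K (y - a)) \<in> borel_measurable borel"
proof -
  have "continuous_on UNIV (\<lambda>y. K (y - a))"
    by (rule continuous_on_compose2[OF lipschitz_on_continuous_on[OF LK(2)]])
      (auto intro!: continuous_intros)
  then show ?thesis by (rule borel_measurable_continuous_onI)
qed

lemma integrable_K_shift:
  assumes "\<mu> \<in> M1 N'"
  shows "integrable \<mu> (\<lambda>y. K (y - a))"
proof -
  interpret finite_measure \<mu> using M1_D[OF assms] by simp
  show ?thesis
    using K_bounded measurable_sets_borel[OF M1_D(1)[OF assms] K_shift_borel_measurable]
    by (intro integrable_const_bound[where B = MK]) auto
qed

lemma K_integral_lipschitz:
  assumes \<mu>: "\<mu> \<in> M1 N"
  shows "norm ((\<integral>y. K (y - a) \<partial>\<mu>) - (\<integral>y. K (y - b) \<partial>\<mu>)) \<le> N * LK * norm (a - b)"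
proof -
  interpret finite_measure \<mu> using M1_D[OF \<mu>] by simp
  have "(\<integral>y. K (y - a) \<partial>\<mu>) - (\<integral>y. K (y - b) \<partial>\<mu>) = (\<integral>y. K (y - a) - K (y - b) \<partial>\<mu>)"
    using integrable_K_shift[OF \<mu>] by (simp add: Bochner_Integration.integral_diff)
  also have "norm \<dots> \<le> (\<integral>y. norm (K (y - a) - K (y - b)) \<partial>\<mu>)"
    by (rule integral_norm_bound)
  also have "\<dots> \<le> (\<integral>y. LK * norm (a - b) \<partial>\<mu>)"
  proof (rule integral_mono)
    show "integrable \<mu> (\<lambda>y. norm (K (y - a) - K (y - b)))"
      using integrable_K_shift[OF \<mu>] by auto
    show "norm (K (y - a) - K (y - b)) \<le> LK * norm (a - b)" for y
      using K_lipschitz[of "y - a" "y - b"] by (simp add: norm_minus_commute)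
  qed simp
  also have "\<dots> = N * LK * norm (a - b)"
    using M1_measure_UNIV[OF \<mu>] M1_D(2)[OF \<mu>] N_pos by simp
  finally show ?thesis .
qed

lemma K_integral_W1_le:
  assumes \<mu>: "\<mu> \<in> M1 N" and \<nu>: "\<nu> \<in> M1 N"
  shows "norm ((\<integral>y. K (y - a) \<partial>\<nu>) - (\<integral>y. K (y - a) \<partial>\<mu>)) \<le> LK * enn2real (W1 \<mu> \<nu>)"
proof -
  define D where "D = norm ((\<integral>y. K (y - a) \<partial>\<nu>) - (\<integral>y. K (y - a) \<partial>\<mu>))"
  have "ennreal (D / LK) \<le> transport_cost \<pi>" if \<pi>: "\<pi> \<in> couplings \<mu> \<nu>" for \<pi>
  proof -
    note c = couplings_D[OF \<pi>]
    define f where "f p = (1 / LK) *\<^sub>R (K (snd p - a) - K (fst p - a))" for p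
    have int_fst: "integrable \<pi> (\<lambda>p. K (fst p - a))"
      using integrable_distr_eq[OF c(4) K_shift_borel_measurable] integrable_K_shift[OF \<mu>] c(2)
      by simp
    have int_snd: "integrable \<pi> (\<lambda>p. K (snd p - a))"
      using integrable_distr_eq[OF c(5) K_shift_borel_measurable] integrable_K_shift[OF \<nu>] c(3)
      by simp
    have "(\<integral>p. f p \<partial>\<pi>) = (1 / LK) *\<^sub>R ((\<integral>y. K (y - a) \<partial>\<nu>) - (\<integral>y. K (y - a) \<partial>\<mu>))"
      using integral_distr[OF c(4) K_shift_borel_measurable, of a]
        integral_distr[OF c(5) K_shift_borel_measurable, of a] int_fst int_snd
      by (simp add: f_def c(2,3) Bochner_Integration.integral_diff)
    then have "ennreal (D / LK) = ennreal (norm (\<integral>p. f p \<partial>\<pi>))"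
      unfolding D_def using LK by simp
    also have "\<dots> \<le> (\<integral>\<^sup>+ p. ennreal (norm (f p)) \<partial>\<pi>)"
      using int_fst int_snd by (intro integral_norm_bound_ennreal) (simp add: f_def)
    also have "\<dots> \<le> transport_cost \<pi>"
    proof (rule nn_integral_mono)
      fix p :: "'a \<times> 'a"
      have "norm (f p) = norm (K (snd p - a) - K (fst p - a)) / LK"
        unfolding f_def using LK by simp
      also have "\<dots> \<le> dist (fst p) (snd p)"
        using K_lipschitz[of "snd p - a" "fst p - a"] LK
        by (simp add: pos_divide_le_eq dist_norm norm_minus_commute mult.commute)
      finally show "ennreal (norm (f p)) \<le> ennreal (dist (fst p) (snd p))" by simp
    qed
    finally show ?thesis .
  qed
  then have "ennreal (D / LK) \<le> W1 \<mu> \<nu>" unfolding W1_def by (rule INF_greatest)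
  then have "enn2real (ennreal (D / LK)) \<le> enn2real (W1 \<mu> \<nu>)"
    using W1_finite[OF \<mu> \<nu> N_pos] by (intro enn2real_mono) simp_all
  then have "D / LK \<le> enn2real (W1 \<mu> \<nu>)"
    unfolding D_def using LK by simp
  then show ?thesis unfolding D_def using LK by (simp add: field_simps)
qed

lemma vfield_difference_le:
  assumes \<mu>: "\<mu> \<in> M1 N" and \<nu>: "\<nu> \<in> M1 N"
  shows "norm (vfield vd K \<nu> a - vfield vd K \<mu> b)
    \<le> (Lv + N * LK) * norm (a - b) + LK * enn2real (W1 \<mu> \<nu>)"
proof -
  have "vfield vd K \<nu> a - vfield vd K \<mu> b
     = (vd a - vd b) - (((\<integral>y. K (y - a) \<partial>\<nu>) - (\<integral>y. K (y - a) \<partial>\<mu>))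
         + ((\<integral>y. K (y - a) \<partial>\<mu>) - (\<integral>y. K (y - b) \<partial>\<mu>)))"
    by (simp add: vfield_def algebra_simps)
  also have "norm \<dots> \<le> norm (vd a - vd b)
      + (norm ((\<integral>y. K (y - a) \<partial>\<nu>) - (\<integral>y. K (y - a) \<partial>\<mu>))
         + norm ((\<integral>y. K (y - a) \<partial>\<mu>) - (\<integral>y. K (y - b) \<partial>\<mu>)))"
    by (rule order_trans[OF norm_triangle_ineq4 add_left_mono[OF norm_triangle_ineq]])
  also have "\<dots> \<le> Lv * norm (a - b) + (LK * enn2real (W1 \<mu> \<nu>) + N * LK * norm (a - b))"
    by (intro add_mono vd_lipschitz K_integral_W1_le[OF \<mu> \<nu>] K_integral_lipschitz[OF \<mu>])
  finally show ?thesis by (simp add: algebra_simps)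
qed

lemma vfield_lipschitz:
  assumes "\<mu> \<in> M1 N"
  shows "norm (vfield vd K \<mu> a - vfield vd K \<mu> b) \<le> (Lv + N * LK) * norm (a - b)"
proof -
  have "vfield vd K \<mu> a - vfield vd K \<mu> b
      = (vd a - vd b) - ((\<integral>y. K (y - a) \<partial>\<mu>) - (\<integral>y. K (y - b) \<partial>\<mu>))"
    by (simp add: vfield_def algebra_simps)
  also have "norm \<dots> \<le> norm (vd a - vd b) + norm ((\<integral>y. K (y - a) \<partial>\<mu>) - (\<integral>y. K (y - b) \<partial>\<mu>))"
    by (rule norm_triangle_ineq4)
  also have "\<dots> \<le> Lv * norm (a - b) + N * LK * norm (a - b)"
    by (intro add_mono vd_lipschitz K_integral_lipschitz[OF assms])
  finally show ?thesis by (simp add: algebra_simps)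
qed

lemma vfield_linear_growth:
  assumes \<mu>: "\<mu> \<in> M1 N"
  shows "norm (vfield vd K \<mu> p) \<le> (norm (vd 0) + N * MK) + Lv * norm p"
proof -
  interpret finite_measure \<mu> using M1_D[OF \<mu>] by simp
  have "norm (\<integral>y. K (y - p) \<partial>\<mu>) \<le> (\<integral>y. norm (K (y - p)) \<partial>\<mu>)"
    by (rule integral_norm_bound)
  also have "\<dots> \<le> (\<integral>y. MK \<partial>\<mu>)"
    using K_bounded integrable_K_shift[OF \<mu>] by (intro integral_mono) auto
  also have "\<dots> = N * MK" using M1_measure_UNIV[OF \<mu>] M1_D(2)[OF \<mu>] N_pos by simp
  finally have "norm (\<integral>y. K (y - p) \<partial>\<mu>) \<le> N * MK" .
  moreover have "norm (vd p) \<le> norm (vd 0) + Lv * norm p"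
    using vd_lipschitz[of p 0] norm_triangle_ineq2[of "vd p" "vd 0"] by simp
  ultimately show ?thesis
    unfolding vfield_def using norm_triangle_ineq4[of "vd p" "\<integral>y. K (y - p) \<partial>\<mu>"] by simp
qed

lemma is_solutionD:
  assumes "is_solution N T vd K \<mu>bar \<mu> \<gamma>"
  shows "\<mu>bar \<in> M1 N" "\<And>t. t \<in> {0..T} \<Longrightarrow> \<mu> t \<in> M1 N"
    "\<And>t. t \<in> {0..T} \<Longrightarrow> \<gamma> t \<in> borel_measurable borel"
    "\<And>t. t \<in> {0..T} \<Longrightarrow> \<mu> t = distr \<mu>bar borel (\<gamma> t)"
    "\<And>t x. t \<in> {0..T} \<Longrightarrow>
      ((\<lambda>s. vfield vd K (\<mu> s) (\<gamma> s x)) has_integral (\<gamma> t x - x)) {0..t}"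
  using assms unfolding is_solution_def by auto

lemma solutions_difference_has_integral:
  assumes \<mu>: "is_solution N T vd K \<mu>bar \<mu> \<gamma>" and \<nu>: "is_solution N T vd K \<nu>bar \<nu> \<eta>"
    and r: "r \<in> {0..T}"
  shows "((\<lambda>s. vfield vd K (\<nu> s) (\<eta> s y) - vfield vd K (\<mu> s) (\<gamma> s x)) has_integral
      (\<eta> r y - \<gamma> r x - (y - x))) {0..r}"
  using has_integral_diff[OF is_solutionD(5)[OF \<nu> r, of y] is_solutionD(5)[OF \<mu> r, of x]]
  by (simp add: algebra_simps)

lemma flow_lipschitz:
  assumes sol: "is_solution N T vd K \<mu>bar \<mu> \<gamma>" and t: "t \<in> {0..T}"
  shows "norm (\<gamma> t y - \<gamma> t x) \<le> exp ((Lv + N * LK) * t) * norm (y - x)"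
proof -
  have "norm (\<gamma> t y - \<gamma> t x) \<le> (norm (y - x) + integral {0..t} (\<lambda>_. 0::real)) * exp ((Lv + N * LK) * t)"
  proof (rule gronwall_integral_equation[OF solutions_difference_has_integral[OF sol sol] _ _ _ _ t])
    show "0 \<le> Lv + N * LK" using Lv LK N_pos by simp
    show "norm (vfield vd K (\<mu> s) (\<gamma> s y) - vfield vd K (\<mu> s) (\<gamma> s x))
        \<le> (Lv + N * LK) * norm (\<gamma> s y - \<gamma> s x) + 0" if "s \<in> {0..T}" for s
      using vfield_lipschitz[OF is_solutionD(2)[OF sol that]] by simp
  qed auto
  then show ?thesis by (simp add: mult.commute)
qed

lemma flow_lipschitz_on:
  assumes "is_solution N T vd K \<mu>bar \<mu> \<gamma>" "t \<in> {0..T}"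
  shows "(exp ((Lv + N * LK) * t))-lipschitz_on UNIV (\<gamma> t)"
  using flow_lipschitz[OF assms] by (intro lipschitz_onI) (auto simp: dist_norm)

lemma flow_at_zero:
  assumes sol: "is_solution N T vd K \<mu>bar \<mu> \<gamma>" and T: "T \<ge> 0"
  shows "\<gamma> 0 x = x"
proof -
  have "((\<lambda>s. vfield vd K (\<mu> s) (\<gamma> s x)) has_integral (\<gamma> 0 x - x)) {0}"
    using is_solutionD(5)[OF sol, of 0 x] T by simp
  then show ?thesis using has_integral_unique[OF _ has_integral_refl(2)] by fastforce
qed

lemma flow_injective:
  assumes sol: "is_solution N T vd K \<mu>bar \<mu> \<gamma>" and t: "t \<in> {0..T}"
  shows "inj (\<gamma> t)"
proof (rule injI)
  fix x y assume eq: "\<gamma> t x = \<gamma> t y"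
  define G where "G r = \<gamma> r y - \<gamma> r x" for r
  define F where "F s = vfield vd K (\<mu> s) (\<gamma> s y) - vfield vd K (\<mu> s) (\<gamma> s x)" for s
  have G_eq: "\<And>r. r \<in> {0..T} \<Longrightarrow> (F has_integral (G r - (y - x))) {0..r}"
    unfolding F_def G_def by (rule solutions_difference_has_integral[OF sol sol])
  have G_cont: "continuous_on {0..T} G" by (rule integral_equation_continuous[OF G_eq])
  have L: "Lv + N * LK \<ge> 0" using Lv LK N_pos by simp
  have "continuous_on {0..t} (\<lambda>r. norm (G r))"
    using t by (intro continuous_intros continuous_on_subset[OF G_cont]) auto
  then have "norm (G 0) = 0"
  proof (rule gronwall_backward_zero[OF _ L])
    show "0 \<in> {0..t}" using t by auto
    fix r assume r: "r \<in> {0..t}"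
    have incr: "G t - G r = integral {r..t} F" and F_int: "F integrable_on {r..t}"
      using integral_equation_increment[OF G_eq, where s = r and t = t] r t by auto
    have "G t = 0" unfolding G_def using eq by simp
    then have "integral {r..t} F = - G r" using incr by simp
    then have "norm (G r) = norm (integral {r..t} F)" by simp
    also have "\<dots> \<le> integral {r..t} (\<lambda>s. (Lv + N * LK) * norm (G s))"
    proof (rule integral_norm_bound_integral[OF F_int])
      show "(\<lambda>s. (Lv + N * LK) * norm (G s)) integrable_on {r..t}"
        using r t
        by (intro integrable_continuous_real continuous_intros continuous_on_subset[OF G_cont]) auto
      show "norm (F s) \<le> (Lv + N * LK) * norm (G s)" if "s \<in> {r..t}" for s
        using vfield_lipschitz[OF is_solutionD(2)[OF sol]] that r t unfolding F_def G_def by auto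
    qed
    finally show "norm (G r) \<le> (Lv + N * LK) * integral {r..t} (\<lambda>s. norm (G s))" by simp
  qed simp
  then show "x = y" unfolding G_def using flow_at_zero[OF sol] t by auto
qed

text \<open>By invariance of domain the continuous injective map \<open>\<gamma> t\<close> is open, so its inverse
  is continuous on the open set \<open>range (\<gamma> t)\<close>; this makes \<open>\<gamma> s \<circ> (\<gamma> t)\<inverse>\<close> Borel.\<close>

lemma flow_factorization:
  assumes sol: "is_solution N T vd K \<mu>bar \<mu> \<gamma>" and t: "t \<in> {0..T}" and s: "s \<in> {0..T}"
  obtains \<Phi> where "\<Phi> \<in> borel_measurable borel" "\<Phi> \<circ> \<gamma> t = \<gamma> s"
proof -
  define U where "U = range (\<gamma> t)"
  define g where "g = inv_into UNIV (\<gamma> t)"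
  have inj: "inj (\<gamma> t)" by (rule flow_injective[OF sol t])
  then have g: "g (\<gamma> t x) = x" for x unfolding g_def by simp
  have cont_t: "continuous_on UNIV (\<gamma> t)" and cont_s: "continuous_on UNIV (\<gamma> s)"
    using lipschitz_on_continuous_on flow_lipschitz_on[OF sol] t s by blast+
  have "open U" unfolding U_def
    by (rule invariance_of_domain_gen) (use cont_t inj in auto)
  moreover have "continuous_on U g" unfolding U_def
    by (rule continuous_on_inverse_open) (use cont_t g in auto)
  then have "continuous_on U (\<lambda>a. \<gamma> s (g a))"
    by (rule continuous_on_compose2[OF cont_s]) auto
  ultimately have "(\<lambda>a. indicator U a *\<^sub>R \<gamma> s (g a)) \<in> borel_measurable borel"
    by (intro borel_measurable_continuous_on_indicator) auto
  moreover have "(\<lambda>a. indicator U a *\<^sub>R \<gamma> s (g a)) \<circ> \<gamma> t = \<gamma> s"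
    by (auto simp: U_def g)
  ultimately show ?thesis using that by blast
qed

section \<open>Regularity in time and stability\<close>

lemma flow_velocity_linear_growth:
  assumes sol: "is_solution N T vd K \<mu>bar \<mu> \<gamma>" and T: "T \<ge> 0"
  obtains c0 c1 where "c0 \<ge> 0" "c1 \<ge> 0"
    "\<And>r z. r \<in> {0..T} \<Longrightarrow> norm (vfield vd K (\<mu> r) (\<gamma> r z)) \<le> c0 + c1 * norm z"
proof -
  define A where "A = norm (vd 0) + N * MK"
  have A: "A \<ge> 0" unfolding A_def using N_pos MK_nonneg by simp
  have velocity: "norm (vfield vd K (\<mu> s) (\<gamma> s z)) \<le> Lv * norm (\<gamma> s z) + A"
    if "s \<in> {0..T}" for s z
    using vfield_linear_growth[OF is_solutionD(2)[OF sol that], of "\<gamma> s z"] unfolding A_def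
    by linarith
  have "norm (vfield vd K (\<mu> r) (\<gamma> r z))
      \<le> (A + Lv * (A * T) * exp (Lv * T)) + Lv * exp (Lv * T) * norm z"
    if r: "r \<in> {0..T}" for r z
  proof -
    have "norm (\<gamma> r z) \<le> (norm z + integral {0..r} (\<lambda>_. A)) * exp (Lv * r)"
      using velocity A r by (intro gronwall_integral_equation[OF is_solutionD(5)[OF sol] Lv(1)]) auto
    also have "\<dots> = (norm z + A * r) * exp (Lv * r)"
      using r by (simp add: mult.commute)
    also have "\<dots> \<le> (norm z + A * T) * exp (Lv * T)"
    proof (rule mult_mono)
      show "norm z + A * r \<le> norm z + A * T" using r A by (simp add: mult_left_mono)
      show "exp (Lv * r) \<le> exp (Lv * T)" using r Lv(1) by (simp add: mult_left_mono)
    qed (use A T in auto)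
    finally have "Lv * norm (\<gamma> r z) \<le> Lv * ((norm z + A * T) * exp (Lv * T))"
      using Lv(1) by (rule mult_left_mono)
    then show ?thesis using velocity[OF r, of z] by (simp add: algebra_simps)
  qed
  moreover have "A + Lv * (A * T) * exp (Lv * T) \<ge> 0" "Lv * exp (Lv * T) \<ge> 0"
    using A Lv(1) T by simp_all
  ultimately show ?thesis using that by blast
qed

lemma flow_time_lipschitz:
  assumes sol: "is_solution N T vd K \<mu>bar \<mu> \<gamma>" and T: "T \<ge> 0"
  obtains c0 c1 where "c0 \<ge> 0" "c1 \<ge> 0"
    "\<And>s t z. s \<in> {0..T} \<Longrightarrow> t \<in> {0..T} \<Longrightarrow> norm (\<gamma> s z - \<gamma> t z) \<le> \<bar>t - s\<bar> * (c0 + c1 * norm z)"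
proof -
  obtain c0 c1 where c: "c0 \<ge> 0" "c1 \<ge> 0"
    and velocity: "\<And>r z. r \<in> {0..T} \<Longrightarrow> norm (vfield vd K (\<mu> r) (\<gamma> r z)) \<le> c0 + c1 * norm z"
    using flow_velocity_linear_growth[OF sol T] by blast
  have ordered: "norm (\<gamma> t z - \<gamma> s z) \<le> (t - s) * (c0 + c1 * norm z)"
    if st: "0 \<le> s" "s \<le> t" "t \<le> T" for s t z
  proof -
    note increment = integral_equation_increment[OF is_solutionD(5)[OF sol] st, of z]
    have "norm (integral {s..t} (\<lambda>r. vfield vd K (\<mu> r) (\<gamma> r z))) \<le> integral {s..t} (\<lambda>_. c0 + c1 * norm z)"
      using increment(2) velocity st by (intro integral_norm_bound_integral) auto
    then show ?thesis using increment(1) st by simp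
  qed
  have "norm (\<gamma> s z - \<gamma> t z) \<le> \<bar>t - s\<bar> * (c0 + c1 * norm z)"
    if "s \<in> {0..T}" "t \<in> {0..T}" for s t z
    using ordered[of s t z] ordered[of t s z] that by (cases "s \<le> t") (auto simp: norm_minus_commute)
  with c that show ?thesis by blast
qed

lemma flow_displacement_integral_le:
  assumes sol: "is_solution N T vd K \<mu>bar \<mu> \<gamma>" and T: "T \<ge> 0"
  obtains C where "C \<ge> 0" "\<And>s t. s \<in> {0..T} \<Longrightarrow> t \<in> {0..T} \<Longrightarrow>
    (\<integral>\<^sup>+ z. ennreal (norm (\<gamma> s z - \<gamma> t z)) \<partial>\<mu>bar) \<le> ennreal (\<bar>t - s\<bar> * C)"
proof -
  obtain c0 c1 where c: "c0 \<ge> 0" "c1 \<ge> 0"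
    and time: "\<And>s t z. s \<in> {0..T} \<Longrightarrow> t \<in> {0..T} \<Longrightarrow>
      norm (\<gamma> s z - \<gamma> t z) \<le> \<bar>t - s\<bar> * (c0 + c1 * norm z)"
    using flow_time_lipschitz[OF sol T] by blast
  have \<mu>bar: "\<mu>bar \<in> M1 N" by (rule is_solutionD(1)[OF sol])
  interpret finite_measure \<mu>bar using M1_D[OF \<mu>bar] by simp
  define C where "C = c0 * N + c1 * (\<integral>z. norm z \<partial>\<mu>bar)"
  have "(\<integral>\<^sup>+ z. ennreal (norm (\<gamma> s z - \<gamma> t z)) \<partial>\<mu>bar) \<le> ennreal (\<bar>t - s\<bar> * C)"
    if "s \<in> {0..T}" "t \<in> {0..T}" for s t
  proof -
    have bound_int: "integrable \<mu>bar (\<lambda>z. \<bar>t - s\<bar> * (c0 + c1 * norm z))"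
      using M1_D(5)[OF \<mu>bar] by simp
    have "(\<integral>\<^sup>+ z. ennreal (norm (\<gamma> s z - \<gamma> t z)) \<partial>\<mu>bar)
        \<le> (\<integral>\<^sup>+ z. ennreal (\<bar>t - s\<bar> * (c0 + c1 * norm z)) \<partial>\<mu>bar)"
      using time that by (intro nn_integral_mono ennreal_leI) auto
    also have "\<dots> = ennreal (\<integral>z. \<bar>t - s\<bar> * (c0 + c1 * norm z) \<partial>\<mu>bar)"
      using c by (intro nn_integral_eq_integral[OF bound_int]) simp
    also have "(\<integral>z. \<bar>t - s\<bar> * (c0 + c1 * norm z) \<partial>\<mu>bar) = \<bar>t - s\<bar> * C"
      using M1_D(5)[OF \<mu>bar] M1_measure_UNIV[OF \<mu>bar] M1_D(2)[OF \<mu>bar] N_pos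
      by (simp add: C_def algebra_simps)
    finally show ?thesis .
  qed
  moreover have "C \<ge> 0" unfolding C_def using c N_pos by simp
  ultimately show ?thesis using that by blast
qed

lemma W1_solutions_le:
  assumes \<mu>: "is_solution N T vd K \<mu>bar \<mu> \<gamma>" and \<nu>: "is_solution N T vd K \<nu>bar \<nu> \<eta>"
    and s: "s \<in> {0..T}" and t: "t \<in> {0..T}"
  shows "W1 (\<mu> s) (\<nu> s) \<le> W1 (\<mu> t) (\<nu> t) + (\<integral>\<^sup>+ z. ennreal (norm (\<gamma> s z - \<gamma> t z)) \<partial>\<mu>bar)
           + (\<integral>\<^sup>+ z. ennreal (norm (\<eta> s z - \<eta> t z)) \<partial>\<nu>bar)"
    (is "_ \<le> _ + ?D\<mu> + ?D\<nu>")
proof (rule ennreal_le_epsilon)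
  fix e :: real assume e: "0 < e"
  obtain \<Phi> where \<Phi>: "\<Phi> \<in> borel_measurable borel" "\<Phi> \<circ> \<gamma> t = \<gamma> s"
    using flow_factorization[OF \<mu> t s] by blast
  obtain \<Psi> where \<Psi>: "\<Psi> \<in> borel_measurable borel" "\<Psi> \<circ> \<eta> t = \<eta> s"
    using flow_factorization[OF \<nu> t s] by blast
  note sets = M1_D(1)[OF is_solutionD(1)[OF \<mu>]] M1_D(1)[OF is_solutionD(1)[OF \<nu>]]
  have \<gamma>t: "\<gamma> t \<in> borel_measurable \<mu>bar" and \<eta>t: "\<eta> t \<in> borel_measurable \<nu>bar"
    using measurable_sets_borel[OF sets(1) is_solutionD(3)[OF \<mu> t]]
      measurable_sets_borel[OF sets(2) is_solutionD(3)[OF \<nu> t]] .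
  have "W1 (\<mu> t) (\<nu> t) < W1 (\<mu> t) (\<nu> t) + ennreal e"
    using W1_finite[OF is_solutionD(2)[OF \<mu> t] is_solutionD(2)[OF \<nu> t] N_pos] e
    by (cases "W1 (\<mu> t) (\<nu> t)") (simp_all add: ennreal_less_iff flip: ennreal_plus)
  then obtain \<pi> where \<pi>: "\<pi> \<in> couplings (\<mu> t) (\<nu> t)"
    and \<pi>_cost: "transport_cost \<pi> < W1 (\<mu> t) (\<nu> t) + ennreal e"
    unfolding W1_def[of "\<mu> t" "\<nu> t"] INF_less_iff by (auto simp: W1_def)
  have \<pi>_bar: "\<pi> \<in> couplings (distr \<mu>bar borel (\<gamma> t)) (distr \<nu>bar borel (\<eta> t))"
    using \<pi> is_solutionD(4)[OF \<mu> t] is_solutionD(4)[OF \<nu> t] by simp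
  have "distr \<pi> borel (map_prod \<Phi> \<Psi>) \<in> couplings (\<mu> s) (\<nu> s)"
    using couplings_distr_map_prod[OF \<pi>_bar sets \<Phi>(1) \<Psi>(1)
        is_solutionD(3)[OF \<mu> t] is_solutionD(3)[OF \<nu> t] \<Phi>(2) \<Psi>(2)]
      is_solutionD(4)[OF \<mu> s] is_solutionD(4)[OF \<nu> s] by simp
  then have "W1 (\<mu> s) (\<nu> s) \<le> transport_cost (distr \<pi> borel (map_prod \<Phi> \<Psi>))"
    by (rule W1_le_transport_cost)
  also have "\<dots> \<le> transport_cost \<pi> + (\<integral>\<^sup>+ x. ennreal (norm (\<Phi> x - x)) \<partial>distr \<mu>bar borel (\<gamma> t))
       + (\<integral>\<^sup>+ y. ennreal (norm (\<Psi> y - y)) \<partial>distr \<nu>bar borel (\<eta> t))"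
    using transport_cost_distr_map_prod_le[OF couplings_D(1)[OF \<pi>] \<Phi>(1) \<Psi>(1)]
      couplings_D(2,3)[OF \<pi>_bar] by simp
  also have "\<dots> = transport_cost \<pi> + ?D\<mu> + ?D\<nu>"
    using nn_integral_distr_borel[OF \<gamma>t displacement_ennreal_borel_measurable[OF \<Phi>(1)]]
      nn_integral_distr_borel[OF \<eta>t displacement_ennreal_borel_measurable[OF \<Psi>(1)]]
      fun_cong[OF \<Phi>(2)] fun_cong[OF \<Psi>(2)]
    by simp
  also have "\<dots> \<le> (W1 (\<mu> t) (\<nu> t) + ennreal e) + ?D\<mu> + ?D\<nu>"
    using \<pi>_cost by (intro add_right_mono) simp
  finally show "W1 (\<mu> s) (\<nu> s) \<le> W1 (\<mu> t) (\<nu> t) + ?D\<mu> + ?D\<nu> + ennreal e"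
    by (simp add: ac_simps)
qed

lemma lipschitz_onI_one_sided:
  fixes w :: "real \<Rightarrow> real"
  assumes "C \<ge> 0" and le: "\<And>s t. s \<in> S \<Longrightarrow> t \<in> S \<Longrightarrow> w s \<le> w t + C * \<bar>t - s\<bar>"
  shows "C-lipschitz_on S w"
proof (rule lipschitz_onI[OF _ assms(1)])
  fix s t assume "s \<in> S" "t \<in> S"
  then have "w s \<le> w t + C * \<bar>s - t\<bar>" "w t \<le> w s + C * \<bar>s - t\<bar>"
    using le[of s t] le[of t s] by (simp_all add: abs_minus_commute)
  then show "dist (w s) (w t) \<le> C * dist s t" by (simp add: dist_real_def abs_le_iff)
qed

lemma W1_solutions_continuous:
  assumes \<mu>: "is_solution N T vd K \<mu>bar \<mu> \<gamma>" and \<nu>: "is_solution N T vd K \<nu>bar \<nu> \<eta>"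
  shows "continuous_on {0..T} (\<lambda>s. enn2real (W1 (\<mu> s) (\<nu> s)))"
proof (cases "T \<ge> 0")
  case True
  obtain C\<mu> where C\<mu>: "C\<mu> \<ge> 0" "\<And>s t. s \<in> {0..T} \<Longrightarrow> t \<in> {0..T} \<Longrightarrow>
      (\<integral>\<^sup>+ z. ennreal (norm (\<gamma> s z - \<gamma> t z)) \<partial>\<mu>bar) \<le> ennreal (\<bar>t - s\<bar> * C\<mu>)"
    using flow_displacement_integral_le[OF \<mu> True] by blast
  obtain C\<nu> where C\<nu>: "C\<nu> \<ge> 0" "\<And>s t. s \<in> {0..T} \<Longrightarrow> t \<in> {0..T} \<Longrightarrow>
      (\<integral>\<^sup>+ z. ennreal (norm (\<eta> s z - \<eta> t z)) \<partial>\<nu>bar) \<le> ennreal (\<bar>t - s\<bar> * C\<nu>)"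
    using flow_displacement_integral_le[OF \<nu> True] by blast
  have "(C\<mu> + C\<nu>)-lipschitz_on {0..T} (\<lambda>s. enn2real (W1 (\<mu> s) (\<nu> s)))"
  proof (rule lipschitz_onI_one_sided)
    show "C\<mu> + C\<nu> \<ge> 0" using C\<mu>(1) C\<nu>(1) by simp
    fix s t assume s: "s \<in> {0..T}" and t: "t \<in> {0..T}"
    define w where "w = enn2real (W1 (\<mu> t) (\<nu> t))"
    have w: "W1 (\<mu> t) (\<nu> t) = ennreal w" "w \<ge> 0"
      using W1_finite[OF is_solutionD(2)[OF \<mu> t] is_solutionD(2)[OF \<nu> t] N_pos]
      by (simp_all add: w_def less_top)
    have "W1 (\<mu> s) (\<nu> s) \<le> W1 (\<mu> t) (\<nu> t) + (\<integral>\<^sup>+ z. ennreal (norm (\<gamma> s z - \<gamma> t z)) \<partial>\<mu>bar)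
        + (\<integral>\<^sup>+ z. ennreal (norm (\<eta> s z - \<eta> t z)) \<partial>\<nu>bar)"
      by (rule W1_solutions_le[OF \<mu> \<nu> s t])
    also have "\<dots> \<le> ennreal w + ennreal (\<bar>t - s\<bar> * C\<mu>) + ennreal (\<bar>t - s\<bar> * C\<nu>)"
      using C\<mu>(2)[OF s t] C\<nu>(2)[OF s t] w(1) by (intro add_mono) auto
    also have "\<dots> = ennreal (w + (C\<mu> + C\<nu>) * \<bar>t - s\<bar>)"
      using w(2) C\<mu>(1) C\<nu>(1) by (simp add: algebra_simps flip: ennreal_plus)
    finally have "enn2real (W1 (\<mu> s) (\<nu> s)) \<le> w + (C\<mu> + C\<nu>) * \<bar>t - s\<bar>"
      using w(2) C\<mu>(1) C\<nu>(1) by (intro enn2real_leI) auto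
    then show "enn2real (W1 (\<mu> s) (\<nu> s)) \<le> enn2real (W1 (\<mu> t) (\<nu> t)) + (C\<mu> + C\<nu>) * \<bar>t - s\<bar>"
      by (simp add: w_def)
  qed
  then show ?thesis by (rule lipschitz_on_continuous_on)
qed simp

lemma flow_stability:
  assumes \<mu>: "is_solution N T vd K \<mu>bar \<mu> \<gamma>" and \<nu>: "is_solution N T vd K \<nu>bar \<nu> \<eta>"
    and t: "t \<in> {0..T}"
  shows "norm (\<eta> t x - \<gamma> t x)
    \<le> LK * integral {0..t} (\<lambda>s. enn2real (W1 (\<mu> s) (\<nu> s))) * exp ((Lv + N * LK) * t)"
proof -
  define w where "w s = enn2real (W1 (\<mu> s) (\<nu> s))" for s
  have w_cont: "continuous_on {0..T} w" unfolding w_def by (rule W1_solutions_continuous[OF \<mu> \<nu>])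
  have "norm (\<eta> t x - \<gamma> t x) \<le> (norm (0::'a) + integral {0..t} (\<lambda>s. LK * w s)) * exp ((Lv + N * LK) * t)"
  proof (rule gronwall_integral_equation[OF _ _ _ _ _ t])
    show "((\<lambda>s. vfield vd K (\<nu> s) (\<eta> s x) - vfield vd K (\<mu> s) (\<gamma> s x)) has_integral
        (\<eta> r x - \<gamma> r x - 0)) {0..r}" if "r \<in> {0..T}" for r
      using solutions_difference_has_integral[OF \<mu> \<nu> that, of x x] by simp
    show "norm (vfield vd K (\<nu> s) (\<eta> s x) - vfield vd K (\<mu> s) (\<gamma> s x))
        \<le> (Lv + N * LK) * norm (\<eta> s x - \<gamma> s x) + LK * w s" if "s \<in> {0..T}" for s
      unfolding w_def
      by (rule vfield_difference_le[OF is_solutionD(2)[OF \<mu> that] is_solutionD(2)[OF \<nu> that]])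
    show "(\<lambda>s. LK * w s) integrable_on {0..T}"
      by (intro integrable_continuous_real continuous_intros w_cont)
  qed (use Lv LK N_pos in \<open>auto simp: w_def\<close>)
  then show ?thesis by (simp add: w_def)
qed

lemma flow_lipschitz_le:
  assumes sol: "is_solution N T vd K \<mu>bar \<mu> \<gamma>" and t: "t \<in> {0..T}"
    and rate: "Lv + N * LK \<le> L"
  shows "norm (\<gamma> t y - \<gamma> t x) \<le> exp (L * t) * norm (y - x)"
proof -
  have "norm (\<gamma> t y - \<gamma> t x) \<le> exp ((Lv + N * LK) * t) * norm (y - x)"
    by (rule flow_lipschitz[OF sol t])
  also have "\<dots> \<le> exp (L * t) * norm (y - x)"
    using rate t by (intro mult_right_mono) (auto simp: mult_right_mono)
  finally show ?thesis .
qed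

lemma flow_stability_le:
  assumes \<mu>: "is_solution N T vd K \<mu>bar \<mu> \<gamma>" and \<nu>: "is_solution N T vd K \<nu>bar \<nu> \<eta>"
    and t: "t \<in> {0..T}" and rate: "Lv + N * LK \<le> L" and coupling: "N * LK \<le> c"
  shows "norm (\<eta> t x - \<gamma> t x)
    \<le> c * exp (L * t) / N * integral {0..t} (\<lambda>s. enn2real (W1 (\<mu> s) (\<nu> s)))"
proof -
  define I where "I = integral {0..t} (\<lambda>s. enn2real (W1 (\<mu> s) (\<nu> s)))"
  have "I \<ge> 0" unfolding I_def using t
    by (intro integral_nonneg integrable_continuous_real
        continuous_on_subset[OF W1_solutions_continuous[OF \<mu> \<nu>]]) auto
  have "LK \<le> c / N" using coupling N_pos by (simp add: field_simps)
  then have "0 \<le> c / N" using LK(1) by linarith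
  then have "0 \<le> c / N * I" using \<open>I \<ge> 0\<close> by (rule mult_nonneg_nonneg)
  have "norm (\<eta> t x - \<gamma> t x) \<le> LK * I * exp ((Lv + N * LK) * t)"
    using flow_stability[OF \<mu> \<nu> t] by (simp add: I_def)
  also have "\<dots> \<le> c / N * I * exp (L * t)"
    using \<open>I \<ge> 0\<close> \<open>LK \<le> c / N\<close> \<open>0 \<le> c / N * I\<close> rate t
    by (intro mult_mono mult_right_mono) (auto simp: mult_right_mono)
  finally show ?thesis by (simp add: I_def field_simps)
qed

end

lemma compact_support_imp_bounded:
  fixes K :: "'a::euclidean_space \<Rightarrow> 'b::real_normed_vector"
  assumes "continuous_on UNIV K" and "compact (closure {x. K x \<noteq> 0})"
  obtains B where "\<And>x. norm (K x) \<le> B"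
proof -
  have "compact (K ` closure {x. K x \<noteq> 0})"
    using assms by (intro compact_continuous_image continuous_on_subset[OF assms(1)]) auto
  then have "bounded (K ` closure {x. K x \<noteq> 0})" by (rule compact_imp_bounded)
  then obtain B where B: "\<And>y. y \<in> K ` closure {x. K x \<noteq> 0} \<Longrightarrow> norm y \<le> B"
    unfolding bounded_iff by blast
  have "norm (K x) \<le> max B 0" for x
    using B[of "K x"] closure_subset[of "{x. K x \<noteq> 0}"] by (cases "K x = 0") auto
  then show ?thesis using that by blast
qed

theorem mainTheorem4:
  fixes vd K :: "'a::euclidean_space \<Rightarrow> 'a" and N :: nat and T Lv LK :: real
  assumes "N \<ge> 1" and "T > 0"
    and "Lv > 0" and "Lv-lipschitz_on UNIV vd"
    and "LK > 0" and "LK-lipschitz_on UNIV K"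
    and "compact (closure {x. K x \<noteq> 0})"
  defines "\<xi> \<equiv> 2 * max Lv (real N * LK)"
  shows "(\<forall>\<mu>bar \<mu> \<gamma>. is_solution (real N) T vd K \<mu>bar \<mu> \<gamma> \<longrightarrow>
            (\<forall>x y. \<forall>t\<in>{0..T}. norm (\<gamma> t y - \<gamma> t x) \<le> exp (\<xi> * t) * norm (y - x)))
       \<and> (\<forall>\<mu>bar \<mu> \<gamma> \<nu>bar \<nu> \<eta>.
            is_solution (real N) T vd K \<mu>bar \<mu> \<gamma> \<and> is_solution (real N) T vd K \<nu>bar \<nu> \<eta> \<longrightarrow>
            (\<forall>x. \<forall>t\<in>{0..T}. norm (\<eta> t x - \<gamma> t x)
               \<le> \<xi> * exp (\<xi> * t) / real N * integral {0..t} (\<lambda>s. enn2real (W1 (\<mu> s) (\<nu> s)))))"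
proof -
  obtain MK where "\<And>x. norm (K x) \<le> MK"
    using compact_support_imp_bounded[OF lipschitz_on_continuous_on[OF assms(6)] assms(7)] by blast
  then interpret nonlocal_velocity vd K "real N" Lv LK MK
    using assms(1,3-6) by unfold_locales auto
  have "0 \<le> real N * LK" using assms(5) by simp
  then have rate: "Lv + real N * LK \<le> \<xi>" and coupling: "real N * LK \<le> \<xi>"
    unfolding \<xi>_def using max.cobounded1[of Lv "real N * LK"] max.cobounded2[of "real N * LK" Lv]
      assms(3) by linarith+
  show ?thesis
  proof (intro conjI allI impI ballI)
    show "norm (\<gamma> t y - \<gamma> t x) \<le> exp (\<xi> * t) * norm (y - x)"
      if "is_solution (real N) T vd K \<mu>bar \<mu> \<gamma>" "t \<in> {0..T}" for \<mu>bar \<mu> \<gamma> x y t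
      using flow_lipschitz_le[OF that rate] .
    show "norm (\<eta> t x - \<gamma> t x)
        \<le> \<xi> * exp (\<xi> * t) / real N * integral {0..t} (\<lambda>s. enn2real (W1 (\<mu> s) (\<nu> s)))"
      if "is_solution (real N) T vd K \<mu>bar \<mu> \<gamma> \<and> is_solution (real N) T vd K \<nu>bar \<nu> \<eta>"
        and "t \<in> {0..T}" for \<mu>bar \<mu> \<gamma> \<nu>bar \<nu> \<eta> x t
      using flow_stability_le[OF conjunct1[OF that(1)] conjunct2[OF that(1)] that(2) rate coupling] .
  qed
qed

end
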